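(* For any $q\in\mathbb{N}$, $s\in\mathbb{N}_0$ and $Y_s=\{y_i\}_{i=1}^s$ with $-1<y_s<\dots<y_1<1$, there exist a function $f\in\Delta^{(q)}(Y_s)$ and a set $A_p=\{\alpha_i\}_{i=1}^p$, $-1\le\alpha_p<\dots<\alpha_1\le1$, with $p\ge q+2$ and $A_p\cap Y_s=\emptyset$, such that for every $n\in\mathbb{N}_0$ there is no algebraic polynomial $P$ of degree $\le n$ with $P\in\Delta^{(q)}(Y_s)$ and $P(\alpha)=f(\alpha)$ for all $\alpha\in A_p$.
   Context: A function $g$ is $q$-monotone on an interval $J$, written $g\in\Delta^{(q)}(J)$, if all divided differences $[t_0,\dots,t_q;g]$ over $q+1$ distinct points of $J$ are nonnegative. With $y_0:=1$, $y_{s+1}:=-1$, $g\in\Delta^{(q)}(Y_s)$ iff $(-1)^ig\in\Delta^{(q)}([y_{i+1},y_i])$ for $0\le i\le s$; for $s=0$, $\Delta^{(q)}(Y_0)=\Delta^{(q)}([-1,1])$. *)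

theory Defs
  imports Complex_Main "HOL-Computational_Algebra.Polynomial"
begin

text \<open>Divided difference of g at the q+1 nodes t 0, ..., t q (Lagrange/explicit form,
  valid for distinct nodes).\<close>
definition divdiff :: "nat \<Rightarrow> (nat \<Rightarrow> real) \<Rightarrow> (real \<Rightarrow> real) \<Rightarrow> real" where
  "divdiff q t g = (\<Sum>j\<le>q. g (t j) / (\<Prod>k\<in>{..q} - {j}. (t j - t k)))"

definition qmono :: "nat \<Rightarrow> real set \<Rightarrow> (real \<Rightarrow> real) \<Rightarrow> bool" where
  "qmono q J g \<longleftrightarrow>
     (\<forall>t. inj_on t {..q} \<and> t ` {..q} \<subseteq> J \<longrightarrow> 0 \<le> divdiff q t g)"

definition yext :: "nat \<Rightarrow> (nat \<Rightarrow> real) \<Rightarrow> nat \<Rightarrow> real" where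
  "yext s y i = (if i = 0 then 1 else if i = s + 1 then -1 else y i)"

definition qmonoY :: "nat \<Rightarrow> nat \<Rightarrow> (nat \<Rightarrow> real) \<Rightarrow> (real \<Rightarrow> real) \<Rightarrow> bool" where
  "qmonoY q s y g \<longleftrightarrow>
     (\<forall>i\<le>s. qmono q {yext s y (i + 1) .. yext s y i} (\<lambda>x. (-1) ^ i * g x))"

end

theory Submission
  imports Defs
begin

text \<open>Take for f the indicator function of the point 1. Its divided differences are nonnegative
  on every interval, since 1 can only occur as the largest node, and f vanishes on every interval
  below y_1 (read y_1 = -1 if s = 0). Interpolate f at 1 and at q+1 further points of (y_1, 1).
  A polynomial that is q-monotone on [y_1, 1] and vanishes at q+1 points vanishes between any two
  of them: moving one node to an intermediate point x leaves a single term in the divided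
  difference, and its sign changes with the choice of the moved node, so it is zero. Hence the
  polynomial has infinitely many roots and cannot take the value 1 at 1.\<close>

lemma divdiff_eq_single_node:
  assumes "j \<le> q" and "\<And>l. l \<le> q \<Longrightarrow> l \<noteq> j \<Longrightarrow> g (t l) = 0"
  shows "divdiff q t g = g (t j) / (\<Prod>k\<in>{..q} - {j}. t j - t k)"
  unfolding divdiff_def
  by (rule sum.mono_neutral_cong_right[where S = "{j}", simplified]) (use assms in auto)

lemma qmono_zero_on:
  assumes "\<And>x. x \<in> J \<Longrightarrow> g x = 0"
  shows "qmono q J g"
  using assms unfolding qmono_def divdiff_def by (simp add: image_subset_iff)

lemma qmono_indicator_right_end:
  assumes "J \<subseteq> {..c}"
  shows "qmono q J (\<lambda>x. if x = c then 1 else 0)"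
  unfolding qmono_def divdiff_def
proof (intro allI impI sum_nonneg)
  fix t l
  assume t: "inj_on t {..q} \<and> t ` {..q} \<subseteq> J" and l: "l \<in> {..q}"
  show "0 \<le> (if t l = c then 1 else 0) / (\<Prod>k\<in>{..q} - {l}. t l - t k)"
  proof (cases "t l = c")
    case True
    have "0 < (\<Prod>k\<in>{..q} - {l}. t l - t k)"
    proof (rule prod_pos)
      fix k assume "k \<in> {..q} - {l}"
      with t l assms have "t k \<le> c" and "t k \<noteq> t l" by (auto simp: inj_on_def)
      with True show "0 < t l - t k" by simp
    qed
    then show ?thesis by simp
  qed simp
qed

lemma qmono_vanishes_between_zeros:
  assumes qm: "qmono q J g" and inj: "inj_on t {..q}" and tJ: "t ` {..q} \<subseteq> J"
    and zeros: "\<And>k. k \<le> q \<Longrightarrow> g (t k) = 0"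
    and ij: "i \<le> q" "j \<le> q" and x: "x \<in> J" "t i < x" "x < t j"
  shows "g x = 0"
proof (cases "x \<in> t ` {..q}")
  case True
  then show ?thesis using zeros by auto
next
  case False
  have moved_node: "0 \<le> g x / (\<Prod>k\<in>{..q} - {l}. x - t k)" if l: "l \<le> q" for l
  proof -
    let ?u = "t(l := x)"
    have "inj_on ?u {..q}" using inj False l by (auto simp: inj_on_def)
    moreover have "?u ` {..q} \<subseteq> J" using tJ x by auto
    ultimately have "0 \<le> divdiff q ?u g" using qm unfolding qmono_def by blast
    also have "divdiff q ?u g = g x / (\<Prod>k\<in>{..q} - {l}. x - ?u k)"
      using divdiff_eq_single_node[of l q g ?u] l zeros by simp
    also have "(\<Prod>k\<in>{..q} - {l}. x - ?u k) = (\<Prod>k\<in>{..q} - {l}. x - t k)"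
      by (rule prod.cong) auto
    finally show ?thesis .
  qed
  define C where "C = (\<Prod>k\<in>{..q} - {i, j}. x - t k)"
  have "C \<noteq> 0" unfolding C_def using False by (simp add: prod_zero_iff) blast
  have "i \<noteq> j" using x by auto
  then have split_i: "{..q} - {i} = insert j ({..q} - {i, j})"
    and split_j: "{..q} - {j} = insert i ({..q} - {i, j})"
    using ij by auto
  have "(\<Prod>k\<in>{..q} - {i}. x - t k) = (x - t j) * C"
    unfolding split_i C_def by (rule prod.insert) auto
  moreover have "(\<Prod>k\<in>{..q} - {j}. x - t k) = (x - t i) * C"
    unfolding split_j C_def by (rule prod.insert) auto
  ultimately have nonneg_j: "0 \<le> g x / ((x - t j) * C)" and nonneg_i: "0 \<le> g x / ((x - t i) * C)"
    using moved_node[OF ij(1)] moved_node[OF ij(2)] by simp_all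
  have "g x / C = (x - t j) * (g x / ((x - t j) * C))"
    using x \<open>C \<noteq> 0\<close> by simp
  also have "\<dots> \<le> 0"
    using x nonneg_j by (intro mult_nonpos_nonneg) simp_all
  finally have "g x / C \<le> 0" .
  moreover have "0 \<le> g x / C"
  proof -
    have "0 \<le> (x - t i) * (g x / ((x - t i) * C))"
      using x nonneg_i by (intro mult_nonneg_nonneg) simp_all
    also have "\<dots> = g x / C"
      using x \<open>C \<noteq> 0\<close> by simp
    finally show ?thesis .
  qed
  ultimately show ?thesis using \<open>C \<noteq> 0\<close> by simp
qed

lemma qmono_poly_eq_0:
  fixes P :: "real poly"
  assumes "qmono q {a..c} (poly P)" and "1 \<le> q"
    and "inj_on t {..q}" and "t ` {..q} \<subseteq> {a..c}" and "\<And>k. k \<le> q \<Longrightarrow> poly P (t k) = 0"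
  shows "P = 0"
proof -
  have "t 0 \<noteq> t q" using assms(2,3) by (auto simp: inj_on_def)
  then obtain i j where ij: "i \<le> q" "j \<le> q" "t i < t j"
    by (metis linorder_neqE_linordered_idom order_refl zero_le)
  have "{t i<..<t j} \<subseteq> {x. poly P x = 0}"
  proof
    fix x assume "x \<in> {t i<..<t j}"
    moreover have "t i \<in> {a..c}" "t j \<in> {a..c}" using ij assms(4) by auto
    ultimately show "x \<in> {x. poly P x = 0}"
      using qmono_vanishes_between_zeros[OF assms(1,3,4,5) ij(1,2)] by auto
  qed
  then have "infinite {x. poly P x = 0}"
    using ij(3) infinite_Ioo finite_subset by blast
  then show ?thesis using poly_roots_finite by blast
qed

lemma no_qmono_poly_interpolates_indicator:
  fixes P :: "real poly" and \<alpha> :: "nat \<Rightarrow> real"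
  assumes "1 \<le> q" and "qmono q {b..1} (poly P)"
    and decr: "\<And>i j. i < j \<Longrightarrow> \<alpha> j < \<alpha> i" and "\<alpha> 1 = 1"
    and nodes: "\<And>i. i \<in> {1..q + 2} \<Longrightarrow> b < \<alpha> i \<and> \<alpha> i \<le> 1"
    and interp: "\<forall>i\<in>{1..q + 2}. poly P (\<alpha> i) = (if \<alpha> i = 1 then 1 else 0)"
  shows False
proof -
  have "P = 0"
  proof (rule qmono_poly_eq_0[OF assms(2,1), of "\<lambda>k. \<alpha> (k + 2)"])
    show "inj_on (\<lambda>k. \<alpha> (k + 2)) {..q}"
    proof (rule linorder_inj_onI')
      fix i j :: nat assume "i < j"
      then show "\<alpha> (i + 2) \<noteq> \<alpha> (j + 2)" using decr[of "i + 2" "j + 2"] by simp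
    qed
    show "(\<lambda>k. \<alpha> (k + 2)) ` {..q} \<subseteq> {b..1}" using nodes by force
    show "poly P (\<alpha> (k + 2)) = 0" if "k \<le> q" for k
      using that interp decr[of 1 "k + 2"] \<open>\<alpha> 1 = 1\<close> by simp
  qed
  then show False using bspec[OF interp, of 1] \<open>\<alpha> 1 = 1\<close> by simp
qed

lemma decreasing_knots_bounds:
  fixes y :: "nat \<Rightarrow> real"
  assumes "s \<ge> 1 \<Longrightarrow> -1 < y s \<and> y 1 < 1"
    and decr: "\<And>i. 1 \<le> i \<Longrightarrow> i < s \<Longrightarrow> y (i + 1) < y i"
  shows "-1 \<le> yext s y 1" and "yext s y 1 < 1" and "\<And>j. j \<in> {1..s} \<Longrightarrow> y j \<le> yext s y 1"
proof -
  have antitone: "y j \<le> y 1" if "1 \<le> j" "j \<le> s" for j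
    using that
  proof (induction j rule: dec_induct)
    case (step k)
    then show ?case using decr[of k] by simp
  qed simp
  then show "\<And>j. j \<in> {1..s} \<Longrightarrow> y j \<le> yext s y 1"
    by (auto simp: yext_def)
  show "-1 \<le> yext s y 1" "yext s y 1 < 1"
    using assms(1) antitone[of s] by (auto simp: yext_def)
qed

lemma qmonoY_indicator_one:
  assumes "\<And>j. j \<in> {1..s} \<Longrightarrow> y j < 1"
  shows "qmonoY q s y (\<lambda>x. if x = 1 then 1 else 0)"
  unfolding qmonoY_def
proof (intro allI impI)
  fix i assume "i \<le> s"
  show "qmono q {yext s y (i + 1)..yext s y i} (\<lambda>x. (- 1) ^ i * (if x = 1 then 1 else 0))"
  proof (cases "i = 0")
    case True
    then show ?thesis using qmono_indicator_right_end[of _ 1] by (simp add: yext_def)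
  next
    case False
    with \<open>i \<le> s\<close> assms have "yext s y i < 1" by (simp add: yext_def)
    then show ?thesis by (intro qmono_zero_on) auto
  qed
qed

lemma qmonoY_imp_qmono_top:
  assumes "qmonoY q s y g"
  shows "qmono q {yext s y 1..1} g"
  using assms unfolding qmonoY_def by (drule_tac x = 0 in spec) (simp add: yext_def)

lemma decreasing_nodes_exist:
  fixes b :: real and p :: nat
  assumes "b < 1" and "p \<ge> 1"
  obtains \<alpha> :: "nat \<Rightarrow> real" where "\<alpha> 1 = 1" and "\<And>i j. i < j \<Longrightarrow> \<alpha> j < \<alpha> i"
    and "\<And>i. i \<in> {1..p} \<Longrightarrow> b < \<alpha> i \<and> \<alpha> i \<le> 1"
proof
  define d where "d = (1 - b) / real p"
  have "0 < d" and p_d: "real p * d = 1 - b" using assms by (simp_all add: d_def)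
  let ?\<alpha> = "\<lambda>i. 1 - (real i - 1) * d"
  show "?\<alpha> 1 = 1" by simp
  show "?\<alpha> j < ?\<alpha> i" if "i < j" for i j using \<open>0 < d\<close> that by simp
  show "b < ?\<alpha> i \<and> ?\<alpha> i \<le> 1" if "i \<in> {1..p}" for i
  proof -
    have "(real i - 1) * d < real p * d" using that \<open>0 < d\<close> by simp
    with p_d that \<open>0 < d\<close> show ?thesis by simp
  qed
qed

theorem lemma1p1:
  fixes q s :: nat and y :: "nat \<Rightarrow> real"
  assumes "q \<ge> 1"
    and "s \<ge> 1 \<Longrightarrow> -1 < y s \<and> y 1 < 1"
    and "\<And>i. 1 \<le> i \<Longrightarrow> i < s \<Longrightarrow> y (i + 1) < y i"
  shows "\<exists>(f :: real \<Rightarrow> real) (p :: nat) (\<alpha> :: nat \<Rightarrow> real).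
           qmonoY q s y f \<and> p \<ge> q + 2 \<and>
           -1 \<le> \<alpha> p \<and> \<alpha> 1 \<le> 1 \<and> (\<forall>i. 1 \<le> i \<and> i < p \<longrightarrow> \<alpha> (i + 1) < \<alpha> i) \<and>
           (\<forall>i\<in>{1..p}. \<forall>j\<in>{1..s}. \<alpha> i \<noteq> y j) \<and>
           (\<forall>n::nat. \<not> (\<exists>P :: real poly. degree P \<le> n \<and> qmonoY q s y (poly P) \<and>
                          (\<forall>i\<in>{1..p}. poly P (\<alpha> i) = f (\<alpha> i))))"
proof -
  define b where "b = yext s y 1"
  note b = decreasing_knots_bounds[OF assms(2,3), folded b_def]
  obtain \<alpha> where \<alpha>1: "\<alpha> 1 = 1" and decr: "\<And>i j. i < j \<Longrightarrow> \<alpha> j < \<alpha> i"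
    and nodes: "\<And>i. i \<in> {1..q + 2} \<Longrightarrow> b < \<alpha> i \<and> \<alpha> i \<le> 1"
    using decreasing_nodes_exist[OF b(2), of "q + 2"] by auto
  show ?thesis
  proof (intro exI[of _ "\<lambda>x::real. if x = 1 then 1 else 0 :: real"] exI[of _ "q + 2"] exI[of _ \<alpha>] conjI)
    show "qmonoY q s y (\<lambda>x. if x = 1 then 1 else 0)"
      using b(2,3) by (intro qmonoY_indicator_one) fastforce
    show "\<forall>n. \<not> (\<exists>P. degree P \<le> n \<and> qmonoY q s y (poly P) \<and>
                       (\<forall>i\<in>{1..q + 2}. poly P (\<alpha> i) = (if \<alpha> i = 1 then 1 else 0)))"
      using no_qmono_poly_interpolates_indicator[where \<alpha> = \<alpha>, OF assms(1) _ decr \<alpha>1 nodes]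
        qmonoY_imp_qmono_top[of q s y] unfolding b_def by blast
    show "\<forall>i\<in>{1..q + 2}. \<forall>j\<in>{1..s}. \<alpha> i \<noteq> y j"
      using nodes b(3) by fastforce
    show "-1 \<le> \<alpha> (q + 2)" using nodes[of "q + 2"] b(1) by simp
    show "\<alpha> 1 \<le> 1" using \<alpha>1 by simp
    show "\<forall>i. 1 \<le> i \<and> i < q + 2 \<longrightarrow> \<alpha> (i + 1) < \<alpha> i" using decr by simp
  qed simp
qed

end
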